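(* Let $\Re$ be a commutative Krasner hyperring with identity $1\ne0$, and let $\phi:L(\Re)\to L(\Re)\cup\{\emptyset\}$ be a function with $\phi\le\phi_3$. If $T$ is a proper $\phi$-prime hyperideal of $\Re$, then $T$ is a $w$-prime hyperideal.
   Context: Krasner hyperring: $(\Re,\oplus)$ canonical hypergroup, $(\Re,\circ)$ commutative semigroup with identity $1\ne0$, $0$ absorbing, distributive. Hyperideals and $L(\Re)$ as usual; $N^n$ is the $n$-th power of the hyperideal $N$ (product hyperideal generated by products). $\phi_3(N)=N^3$, $\phi_w(N)=\bigcap_{n\ge1}N^n$. For functions $\sigma_1,\sigma_2:L(\Re)\to L(\Re)\cup\{\emptyset\}$, $\sigma_1\le\sigma_2$ means $\sigma_1(N)\subseteq\sigma_2(N)$ for all $N$. A hyperideal $N$ is $\sigma$-prime if $a\circ b\in N$, $a\circ b\notin\sigma(N)$ imply $a\in N$ or $b\in N$; $w$-prime means $\phi_w$-prime. *)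

theory Defs
  imports Main
begin

record 'a khr =
  carrier :: "'a set"
  hadd :: "'a \<Rightarrow> 'a \<Rightarrow> 'a set"
  hneg :: "'a \<Rightarrow> 'a"
  hmult :: "'a \<Rightarrow> 'a \<Rightarrow> 'a"
  hzero :: "'a"
  hone :: "'a"

definition hsum :: "'a khr \<Rightarrow> 'a set \<Rightarrow> 'a set \<Rightarrow> 'a set" where
  "hsum R A B = (\<Union>a\<in>A. \<Union>b\<in>B. hadd R a b)"

definition krasner_hyperring :: "'a khr \<Rightarrow> bool" where
  "krasner_hyperring R \<longleftrightarrow>
     hzero R \<in> carrier R \<and> hone R \<in> carrier R \<and> hone R \<noteq> hzero R
   \<comment> \<open>canonical hypergroup\<close>
   \<and> (\<forall>x\<in>carrier R. \<forall>y\<in>carrier R. hadd R x y \<subseteq> carrier R \<and> hadd R x y \<noteq> {})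
   \<and> (\<forall>x\<in>carrier R. \<forall>y\<in>carrier R. \<forall>z\<in>carrier R.
        hsum R (hadd R x y) {z} = hsum R {x} (hadd R y z))
   \<and> (\<forall>x\<in>carrier R. \<forall>y\<in>carrier R. hadd R x y = hadd R y x)
   \<and> (\<forall>x\<in>carrier R. hadd R x (hzero R) = {x})
   \<and> (\<forall>x\<in>carrier R. hneg R x \<in> carrier R \<and> hzero R \<in> hadd R x (hneg R x)
        \<and> (\<forall>y\<in>carrier R. hzero R \<in> hadd R x y \<longrightarrow> y = hneg R x))
   \<and> (\<forall>x\<in>carrier R. \<forall>y\<in>carrier R. \<forall>z\<in>carrier R.
        z \<in> hadd R x y \<longrightarrow> x \<in> hadd R z (hneg R y) \<and> y \<in> hadd R z (hneg R x))
   \<comment> \<open>commutative multiplicative semigroup with identity, zero absorbing\<close>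
   \<and> (\<forall>x\<in>carrier R. \<forall>y\<in>carrier R. hmult R x y \<in> carrier R)
   \<and> (\<forall>x\<in>carrier R. \<forall>y\<in>carrier R. \<forall>z\<in>carrier R.
        hmult R (hmult R x y) z = hmult R x (hmult R y z))
   \<and> (\<forall>x\<in>carrier R. \<forall>y\<in>carrier R. hmult R x y = hmult R y x)
   \<and> (\<forall>x\<in>carrier R. hmult R (hone R) x = x)
   \<and> (\<forall>x\<in>carrier R. hmult R (hzero R) x = hzero R)
   \<comment> \<open>distributivity\<close>
   \<and> (\<forall>x\<in>carrier R. \<forall>y\<in>carrier R. \<forall>z\<in>carrier R.
        hmult R z ` hadd R x y = hadd R (hmult R z x) (hmult R z y))"

definition hyperideal :: "'a khr \<Rightarrow> 'a set \<Rightarrow> bool" where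
  "hyperideal R N \<longleftrightarrow> N \<subseteq> carrier R \<and> N \<noteq> {}
     \<and> (\<forall>a\<in>N. \<forall>b\<in>N. hadd R a (hneg R b) \<subseteq> N)
     \<and> (\<forall>r\<in>carrier R. \<forall>a\<in>N. hmult R r a \<in> N)"

definition hgen :: "'a khr \<Rightarrow> 'a set \<Rightarrow> 'a set" where
  "hgen R S = \<Inter>{K. hyperideal R K \<and> S \<subseteq> K}"

definition hprod :: "'a khr \<Rightarrow> 'a set \<Rightarrow> 'a set \<Rightarrow> 'a set" where
  "hprod R I J = hgen R {hmult R a b | a b. a \<in> I \<and> b \<in> J}"

fun hpow :: "'a khr \<Rightarrow> 'a set \<Rightarrow> nat \<Rightarrow> 'a set" where
  "hpow R N 0 = carrier R"
| "hpow R N (Suc 0) = N"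
| "hpow R N (Suc (Suc n)) = hprod R (hpow R N (Suc n)) N"

definition phi3 :: "'a khr \<Rightarrow> 'a set \<Rightarrow> 'a set" where
  "phi3 R N = hpow R N 3"

definition phiw :: "'a khr \<Rightarrow> 'a set \<Rightarrow> 'a set" where
  "phiw R N = (\<Inter>n\<in>{1..}. hpow R N n)"

definition phi_fun :: "'a khr \<Rightarrow> ('a set \<Rightarrow> 'a set) \<Rightarrow> bool" where
  "phi_fun R \<phi> \<longleftrightarrow> (\<forall>N. hyperideal R N \<longrightarrow> \<phi> N = {} \<or> hyperideal R (\<phi> N))"

definition phi_le :: "'a khr \<Rightarrow> ('a set \<Rightarrow> 'a set) \<Rightarrow> ('a set \<Rightarrow> 'a set) \<Rightarrow> bool" where
  "phi_le R \<sigma>1 \<sigma>2 \<longleftrightarrow> (\<forall>N. hyperideal R N \<longrightarrow> \<sigma>1 N \<subseteq> \<sigma>2 N)"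

definition sigma_prime :: "'a khr \<Rightarrow> ('a set \<Rightarrow> 'a set) \<Rightarrow> 'a set \<Rightarrow> bool" where
  "sigma_prime R \<sigma> N \<longleftrightarrow> hyperideal R N \<and>
     (\<forall>a\<in>carrier R. \<forall>b\<in>carrier R. hmult R a b \<in> N \<and> hmult R a b \<notin> \<sigma> N \<longrightarrow> a \<in> N \<or> b \<in> N)"

definition w_prime :: "'a khr \<Rightarrow> 'a set \<Rightarrow> bool" where
  "w_prime R N \<longleftrightarrow> sigma_prime R (phiw R) N"

end

theory Submission
  imports Defs
begin

(* If ab lies in T but not in phi_w(T) while a, b lie outside T, then ab lies in F = phi(T),
   a hyperideal with F <= T^3 <= T. Perturbing a and b by elements p, q of T (any x in a + p
   and y in b + q stay outside T) and applying the F-primality of T to xy shows that pq lies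
   in F, so T^2 <= F <= T^3 <= T^2. The powers of T therefore stabilise at T^2, whence
   phi_w(T) = T^2 contains F and hence ab, a contradiction. *)

lemma hyperideal_subset: "hyperideal R I \<Longrightarrow> I \<subseteq> carrier R"
  unfolding hyperideal_def by blast

lemma hyperideal_hmult_closed:
  "hyperideal R I \<Longrightarrow> r \<in> carrier R \<Longrightarrow> x \<in> I \<Longrightarrow> hmult R r x \<in> I"
  unfolding hyperideal_def by blast

lemma hyperideal_hadd_hneg_closed:
  "hyperideal R I \<Longrightarrow> x \<in> I \<Longrightarrow> y \<in> I \<Longrightarrow> hadd R x (hneg R y) \<subseteq> I"
  unfolding hyperideal_def by blast

lemma hgen_least: "hyperideal R K \<Longrightarrow> S \<subseteq> K \<Longrightarrow> hgen R S \<subseteq> K"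
  unfolding hgen_def by blast

lemma sigma_primeD:
  "sigma_prime R \<sigma> T \<Longrightarrow> a \<in> carrier R \<Longrightarrow> b \<in> carrier R \<Longrightarrow> hmult R a b \<in> T \<Longrightarrow>
     hmult R a b \<notin> \<sigma> T \<Longrightarrow> a \<in> T \<or> b \<in> T"
  unfolding sigma_prime_def by blast

lemma sigma_prime_hyperideal: "sigma_prime R \<sigma> T \<Longrightarrow> hyperideal R T"
  unfolding sigma_prime_def by blast

lemma hpow_stable:
  assumes "hpow R N 3 = hpow R N 2" "n \<ge> 2"
  shows "hpow R N n = hpow R N 2"
  using assms(2)
proof (induction n rule: dec_induct)
  case (step n)
  then obtain m where "n = Suc m"
    using Suc_le_D numeral_2_eq_2 by metis
  then have "hpow R N (Suc n) = hprod R (hpow R N n) N"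
    by simp
  also have "\<dots> = hpow R N 3"
    using step.IH by (simp add: numeral_3_eq_3 numeral_2_eq_2)
  finally show ?case
    using assms(1) by simp
qed simp

locale krasner =
  fixes R :: "'a khr"
  assumes krasner_hyperring: "krasner_hyperring R"
begin

lemma
  shows hzero_closed: "hzero R \<in> carrier R"
    and hadd_closed: "\<And>x y. x \<in> carrier R \<Longrightarrow> y \<in> carrier R \<Longrightarrow> hadd R x y \<subseteq> carrier R"
    and hadd_nonempty: "\<And>x y. x \<in> carrier R \<Longrightarrow> y \<in> carrier R \<Longrightarrow> hadd R x y \<noteq> {}"
    and hadd_commute: "\<And>x y. x \<in> carrier R \<Longrightarrow> y \<in> carrier R \<Longrightarrow> hadd R x y = hadd R y x"
    and hadd_hzero: "\<And>x. x \<in> carrier R \<Longrightarrow> hadd R x (hzero R) = {x}"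
    and hneg_closed: "\<And>x. x \<in> carrier R \<Longrightarrow> hneg R x \<in> carrier R"
    and hzero_in_hadd_hneg: "\<And>x. x \<in> carrier R \<Longrightarrow> hzero R \<in> hadd R x (hneg R x)"
    and hneg_unique: "\<And>x y. x \<in> carrier R \<Longrightarrow> y \<in> carrier R \<Longrightarrow> hzero R \<in> hadd R x y \<Longrightarrow> y = hneg R x"
    and hmult_closed: "\<And>x y. x \<in> carrier R \<Longrightarrow> y \<in> carrier R \<Longrightarrow> hmult R x y \<in> carrier R"
    and hmult_commute: "\<And>x y. x \<in> carrier R \<Longrightarrow> y \<in> carrier R \<Longrightarrow> hmult R x y = hmult R y x"
    and hmult_hadd_distrib: "\<And>x y z. x \<in> carrier R \<Longrightarrow> y \<in> carrier R \<Longrightarrow> z \<in> carrier R \<Longrightarrow>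
           hmult R z ` hadd R x y = hadd R (hmult R z x) (hmult R z y)"
  using krasner_hyperring unfolding krasner_hyperring_def by simp_all

lemma hadd_reversible:
  assumes "x \<in> carrier R" "y \<in> carrier R" "z \<in> hadd R x y"
  shows "y \<in> hadd R z (hneg R x)"
proof -
  have "\<forall>x\<in>carrier R. \<forall>y\<in>carrier R. \<forall>z\<in>carrier R.
          z \<in> hadd R x y \<longrightarrow> x \<in> hadd R z (hneg R y) \<and> y \<in> hadd R z (hneg R x)"
    using krasner_hyperring unfolding krasner_hyperring_def by (elim conjE)
  moreover have "z \<in> carrier R"
    using hadd_closed assms by blast
  ultimately show ?thesis
    using assms by blast
qed

lemma hneg_hneg:
  assumes "x \<in> carrier R"
  shows "hneg R (hneg R x) = x"
proof -
  have "hzero R \<in> hadd R (hneg R x) x"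
    using assms hzero_in_hadd_hneg hadd_commute hneg_closed by metis
  then show ?thesis
    using assms hneg_unique hneg_closed by metis
qed

lemma hmult_mem_hadd:
  assumes "x \<in> carrier R" "y \<in> carrier R" "c \<in> carrier R" "z \<in> hadd R x y"
  shows "hmult R c z \<in> hadd R (hmult R c x) (hmult R c y)"
  using hmult_hadd_distrib[OF assms(1-3)] assms(4) by blast

lemma hyperideal_hmult_closed_right:
  assumes "hyperideal R I" "x \<in> I" "r \<in> carrier R"
  shows "hmult R x r \<in> I"
proof -
  have "x \<in> carrier R"
    using assms(1,2) hyperideal_subset by blast
  then show ?thesis
    using hyperideal_hmult_closed[OF assms(1,3,2)] hmult_commute[OF assms(3)] by simp
qed

lemma hyperideal_hzero:
  assumes "hyperideal R I"
  shows "hzero R \<in> I"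
proof -
  obtain x where x: "x \<in> I"
    using assms unfolding hyperideal_def by blast
  then have "hzero R \<in> hadd R x (hneg R x)"
    using hzero_in_hadd_hneg hyperideal_subset[OF assms] by blast
  then show ?thesis
    using hyperideal_hadd_hneg_closed[OF assms x x] by blast
qed

lemma hyperideal_hneg:
  assumes "hyperideal R I" "x \<in> I"
  shows "hneg R x \<in> I"
proof -
  have "x \<in> carrier R"
    using assms hyperideal_subset by blast
  then have "hadd R (hzero R) (hneg R x) = {hneg R x}"
    using hadd_commute[OF hzero_closed hneg_closed] hadd_hzero[OF hneg_closed] by simp
  then show ?thesis
    using hyperideal_hadd_hneg_closed[OF assms(1) hyperideal_hzero[OF assms(1)] assms(2)] by blast
qed

lemma hyperideal_hadd_closed:
  assumes "hyperideal R I" "x \<in> I" "y \<in> I"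
  shows "hadd R x y \<subseteq> I"
proof -
  have "y \<in> carrier R"
    using assms(1,3) hyperideal_subset by blast
  then show ?thesis
    using hyperideal_hadd_hneg_closed[OF assms(1,2) hyperideal_hneg[OF assms(1,3)]] hneg_hneg
    by simp
qed

lemma hyperideal_hadd_iff:
  assumes "hyperideal R I" "u \<in> I" "v \<in> carrier R" "z \<in> hadd R u v"
  shows "z \<in> I \<longleftrightarrow> v \<in> I"
proof
  assume "z \<in> I"
  moreover have "v \<in> hadd R z (hneg R u)"
    using hadd_reversible[OF _ assms(3,4)] assms(1,2) hyperideal_subset by blast
  ultimately show "v \<in> I"
    using hyperideal_hadd_hneg_closed[OF assms(1) _ assms(2)] by blast
next
  assume "v \<in> I"
  then show "z \<in> I"
    using hyperideal_hadd_closed[OF assms(1,2)] assms(4) by blast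
qed

lemma hyperideal_carrier: "hyperideal R (carrier R)"
  unfolding hyperideal_def
  using hzero_closed hadd_closed hneg_closed hmult_closed by blast

lemma hyperideal_hgen:
  assumes "S \<subseteq> carrier R"
  shows "hyperideal R (hgen R S)"
proof -
  let ?Ks = "{K. hyperideal R K \<and> S \<subseteq> K}"
  have "hgen R S \<subseteq> carrier R"
    using hgen_least[OF hyperideal_carrier assms] .
  moreover have "hzero R \<in> hgen R S"
    unfolding hgen_def using hyperideal_hzero by blast
  moreover have "hadd R x (hneg R y) \<subseteq> hgen R S" if "x \<in> hgen R S" "y \<in> hgen R S" for x y
    unfolding hgen_def
  proof (rule Inter_greatest)
    fix K assume K: "K \<in> ?Ks"
    then have "x \<in> K" "y \<in> K"
      using that unfolding hgen_def by blast+
    then show "hadd R x (hneg R y) \<subseteq> K"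
      using K hyperideal_hadd_hneg_closed[of R K x y] by blast
  qed
  moreover have "hmult R r x \<in> hgen R S" if "r \<in> carrier R" "x \<in> hgen R S" for r x
    unfolding hgen_def
  proof (rule InterI)
    fix K assume K: "K \<in> ?Ks"
    then have "x \<in> K"
      using that unfolding hgen_def by blast
    then show "hmult R r x \<in> K"
      using K that(1) hyperideal_hmult_closed[of R K r x] by blast
  qed
  ultimately show ?thesis
    unfolding hyperideal_def by blast
qed

lemma hyperideal_hprod:
  assumes "I \<subseteq> carrier R" "J \<subseteq> carrier R"
  shows "hyperideal R (hprod R I J)"
  unfolding hprod_def by (rule hyperideal_hgen) (use assms hmult_closed in blast)

lemma hprod_least:
  assumes "hyperideal R K" "\<And>x y. x \<in> I \<Longrightarrow> y \<in> J \<Longrightarrow> hmult R x y \<in> K"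
  shows "hprod R I J \<subseteq> K"
  unfolding hprod_def by (rule hgen_least[OF assms(1)]) (use assms(2) in blast)

lemma hprod_subset_left:
  assumes "hyperideal R I" "J \<subseteq> carrier R"
  shows "hprod R I J \<subseteq> I"
  by (rule hprod_least[OF assms(1)]) (use assms hyperideal_hmult_closed_right in blast)

lemma hpow_2_subset:
  assumes "hyperideal R N"
  shows "hpow R N 2 \<subseteq> N"
  using hprod_subset_left[OF assms hyperideal_subset[OF assms]] by (simp add: numeral_2_eq_2)

lemma hpow_3_subset_hpow_2:
  assumes "hyperideal R N"
  shows "hpow R N 3 \<subseteq> hpow R N 2"
proof -
  have "hyperideal R (hpow R N 2)"
    using hyperideal_hprod[OF hyperideal_subset[OF assms] hyperideal_subset[OF assms]]
    by (simp add: numeral_2_eq_2)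
  then show ?thesis
    using hprod_subset_left[OF _ hyperideal_subset[OF assms]]
    by (simp add: numeral_2_eq_2 numeral_3_eq_3)
qed

lemma phiw_eq_hpow_2:
  assumes "hyperideal R N" "hpow R N 3 = hpow R N 2"
  shows "phiw R N = hpow R N 2"
proof
  show "phiw R N \<subseteq> hpow R N 2"
    unfolding phiw_def by (rule INT_lower) simp
  show "hpow R N 2 \<subseteq> phiw R N"
    unfolding phiw_def
  proof (rule INT_greatest)
    fix n :: nat
    assume "n \<in> {1..}"
    then consider "n = 1" | "n \<ge> 2"
      by fastforce
    then show "hpow R N 2 \<subseteq> hpow R N n"
    proof cases
      case 1
      then show ?thesis
        using hpow_2_subset[OF assms(1)] by simp
    next
      case 2
      then show ?thesis
        using hpow_stable[OF assms(2)] by blast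
    qed
  qed
qed

lemma hadd_notin_hyperideal:
  assumes "hyperideal R I" "b \<in> carrier R" "b \<notin> I" "p \<in> I" "x \<in> hadd R b p"
  shows "x \<notin> I"
  using hyperideal_hadd_iff[OF assms(1,4,2)] assms hadd_commute hyperideal_subset by blast

text \<open>The two lemmas below concern a \<open>\<sigma>\<close>-prime hyperideal \<open>T\<close> with a product \<open>a b \<in> \<sigma> T\<close>
  of factors outside \<open>T\<close>; they are the hyperring form of the fact that a weakly prime
  ideal which is not prime has square zero.\<close>

lemma sigma_prime_hmult_mem:
  assumes T: "sigma_prime R \<sigma> T" and F: "hyperideal R (\<sigma> T)" "\<sigma> T \<subseteq> T"
    and a: "a \<in> carrier R" "a \<notin> T" and b: "b \<in> carrier R" "b \<notin> T"
    and ab: "hmult R a b \<in> \<sigma> T" and p: "p \<in> T"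
  shows "hmult R a p \<in> \<sigma> T"
proof (rule ccontr)
  assume ap: "hmult R a p \<notin> \<sigma> T"
  have TI: "hyperideal R T"
    using sigma_prime_hyperideal[OF T] .
  have pc: "p \<in> carrier R"
    using TI p hyperideal_subset by blast
  obtain x where x: "x \<in> hadd R b p"
    using hadd_nonempty[OF b(1) pc] by blast
  have xc: "x \<in> carrier R"
    using hadd_closed[OF b(1) pc] x by blast
  have ax: "hmult R a x \<in> hadd R (hmult R a b) (hmult R a p)"
    using hmult_mem_hadd[OF b(1) pc a(1) x] .
  have "hmult R a x \<in> T"
    using hyperideal_hadd_iff[OF TI _ hmult_closed[OF a(1) pc] ax] ab F(2)
      hyperideal_hmult_closed[OF TI a(1) p] by blast
  moreover have "hmult R a x \<notin> \<sigma> T"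
    using hyperideal_hadd_iff[OF F(1) ab hmult_closed[OF a(1) pc] ax] ap by blast
  ultimately have "x \<in> T"
    using sigma_primeD[OF T a(1) xc] a(2) by blast
  then show False
    using hadd_notin_hyperideal[OF TI b p x] by blast
qed

lemma sigma_prime_hpow_2_subset:
  assumes T: "sigma_prime R \<sigma> T" and F: "hyperideal R (\<sigma> T)" "\<sigma> T \<subseteq> T"
    and a: "a \<in> carrier R" "a \<notin> T" and b: "b \<in> carrier R" "b \<notin> T"
    and ab: "hmult R a b \<in> \<sigma> T"
  shows "hpow R T 2 \<subseteq> \<sigma> T"
proof -
  have TI: "hyperideal R T"
    using sigma_prime_hyperideal[OF T] .
  have ba: "hmult R b a \<in> \<sigma> T"
    using ab hmult_commute[OF a(1) b(1)] by simp
  have "hmult R p q \<in> \<sigma> T" if p: "p \<in> T" and q: "q \<in> T" for p q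
  proof (rule ccontr)
    assume pq: "hmult R p q \<notin> \<sigma> T"
    have pc: "p \<in> carrier R" and qc: "q \<in> carrier R"
      using TI p q hyperideal_subset by blast+
    obtain x where x: "x \<in> hadd R a p"
      using hadd_nonempty[OF a(1) pc] by blast
    obtain y where y: "y \<in> hadd R b q"
      using hadd_nonempty[OF b(1) qc] by blast
    have xc: "x \<in> carrier R" and yc: "y \<in> carrier R"
      using hadd_closed[OF a(1) pc] hadd_closed[OF b(1) qc] x y by blast+
    have "hmult R b x \<in> \<sigma> T"
      using hyperideal_hadd_closed[OF F(1) ba sigma_prime_hmult_mem[OF T F b a ba p]]
        hmult_mem_hadd[OF a(1) pc b(1) x] by blast
    then have xb: "hmult R x b \<in> \<sigma> T"
      using hmult_commute[OF b(1) xc] by simp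
    have "hmult R q x \<notin> \<sigma> T"
      using hyperideal_hadd_iff[OF F(1) _ hmult_closed[OF qc pc] hmult_mem_hadd[OF a(1) pc qc x]]
        sigma_prime_hmult_mem[OF T F a b ab q] pq
        hmult_commute[OF a(1) qc] hmult_commute[OF pc qc] by simp
    then have xq: "hmult R x q \<notin> \<sigma> T"
      using hmult_commute[OF qc xc] by simp
    have xy: "hmult R x y \<in> hadd R (hmult R x b) (hmult R x q)"
      using hmult_mem_hadd[OF b(1) qc xc y] .
    have "hmult R x y \<in> T"
      using hyperideal_hadd_iff[OF TI _ hmult_closed[OF xc qc] xy] xb F(2)
        hyperideal_hmult_closed[OF TI xc q] by blast
    moreover have "hmult R x y \<notin> \<sigma> T"
      using hyperideal_hadd_iff[OF F(1) xb hmult_closed[OF xc qc] xy] xq by blast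
    ultimately have "x \<in> T \<or> y \<in> T"
      using sigma_primeD[OF T xc yc] by blast
    then show False
      using hadd_notin_hyperideal[OF TI a p x] hadd_notin_hyperideal[OF TI b q y] by blast
  qed
  then show ?thesis
    using hprod_least[OF F(1)] by (simp add: numeral_2_eq_2)
qed

end

theorem mainTheorem7:
  fixes R :: "'a khr" and \<phi> :: "'a set \<Rightarrow> 'a set" and T :: "'a set"
  assumes "krasner_hyperring R"
    and "phi_fun R \<phi>"
    and "phi_le R \<phi> (phi3 R)"
    and "T \<noteq> carrier R"
    and "sigma_prime R \<phi> T"
  shows "w_prime R T"
proof -
  interpret krasner R by unfold_locales (rule assms(1))
  have T: "hyperideal R T"
    using sigma_prime_hyperideal[OF assms(5)] .
  have "a \<in> T \<or> b \<in> T"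
    if a: "a \<in> carrier R" and b: "b \<in> carrier R"
      and ab: "hmult R a b \<in> T" "hmult R a b \<notin> phiw R T" for a b
  proof (rule ccontr)
    assume a_b: "\<not> (a \<in> T \<or> b \<in> T)"
    have ab_F: "hmult R a b \<in> \<phi> T"
      using sigma_primeD[OF assms(5) a b ab(1)] a_b by blast
    have F: "hyperideal R (\<phi> T)"
      using assms(2) T ab_F unfolding phi_fun_def by blast
    have F_cube: "\<phi> T \<subseteq> hpow R T 3"
      using assms(3) T unfolding phi_le_def phi3_def by blast
    have cube_square: "hpow R T 3 \<subseteq> hpow R T 2"
      using hpow_3_subset_hpow_2[OF T] .
    have "\<phi> T \<subseteq> T"
      using F_cube cube_square hpow_2_subset[OF T] by blast
    then have "hpow R T 2 \<subseteq> \<phi> T"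
      using sigma_prime_hpow_2_subset[OF assms(5) F] a b a_b ab_F by blast
    then have "hpow R T 3 = hpow R T 2"
      using F_cube cube_square by blast
    then have "phiw R T = hpow R T 2"
      using phiw_eq_hpow_2[OF T] by blast
    then show False
      using ab(2) ab_F F_cube cube_square by blast
  qed
  then show ?thesis
    unfolding w_prime_def sigma_prime_def using T by blast
qed

end
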